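(* Every simple binary matroid has a unique minimal tropical basis.
   Context: A matroid $M=([n],\mathscr C)$ is given by its circuit set $\mathscr C$. It is simple if every circuit has cardinality greater than $2$, and binary if it is representable over $\mathbb F_2$. Let ${\bf TP}^{n-1}$ be the tropical projective space over the tropical semifield $(\mathbb R\cup\{-\infty\},\max,+)$. For a circuit $C$, $V(C)$ is the set of points $x\in{\bf TP}^{n-1}$ such that the maximum of $\{x_i : i\in C\}$ is attained at least twice. For $B\subseteq\mathscr C$, set $V(B)=\bigcap_{C\in B}V(C)$. The Bergman fan of $M$ is $V(\mathscr C)$. A subset $B\subseteq\mathscr C$ is a tropical basis if $V(B)=V(\mathscr C)$. A tropical basis is minimal if no proper subset of it is a tropical basis. *)

theory Defs
  imports Main "HOL-Library.Extended_Real"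
begin

definition matroid_circuits :: "nat \<Rightarrow> nat set set \<Rightarrow> bool" where
  "matroid_circuits n \<C> \<longleftrightarrow>
     (\<forall>C\<in>\<C>. C \<subseteq> {..<n}) \<and>
     {} \<notin> \<C> \<and>
     (\<forall>C1\<in>\<C>. \<forall>C2\<in>\<C>. C1 \<subseteq> C2 \<longrightarrow> C1 = C2) \<and>
     (\<forall>C1\<in>\<C>. \<forall>C2\<in>\<C>. \<forall>e. C1 \<noteq> C2 \<and> e \<in> C1 \<inter> C2 \<longrightarrow>
        (\<exists>C3\<in>\<C>. C3 \<subseteq> (C1 \<union> C2) - {e}))"

definition simple_matroid :: "nat \<Rightarrow> nat set set \<Rightarrow> bool" where
  "simple_matroid n \<C> \<longleftrightarrow> (\<forall>C\<in>\<C>. card C > 2)"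

text \<open>Vectors in F_2^m: v i k is the k-th coordinate (k < m) of the vector attached to i.
  A finite family of vectors sums to zero over F_2 iff every coordinate has an even number of ones.\<close>

definition f2_sum_zero :: "nat \<Rightarrow> (nat \<Rightarrow> nat \<Rightarrow> bool) \<Rightarrow> nat set \<Rightarrow> bool" where
  "f2_sum_zero m v T \<longleftrightarrow> (\<forall>k<m. even (card {i\<in>T. v i k}))"

text \<open>The circuits of the vector matroid of v_0,...,v_{n-1} over F_2 are the minimal
  linearly dependent subsets, i.e. the minimal nonempty subsets summing to zero.\<close>

definition binary_matroid :: "nat \<Rightarrow> nat set set \<Rightarrow> bool" where
  "binary_matroid n \<C> \<longleftrightarrow>
     (\<exists>m v. \<C> = {T. T \<subseteq> {..<n} \<and> T \<noteq> {} \<and> f2_sum_zero m v T \<and>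
                     (\<forall>T'. T' \<subset> T \<and> T' \<noteq> {} \<longrightarrow> \<not> f2_sum_zero m v T')})"

text \<open>Representatives of points of TP^{n-1}: vectors in (R \<union> {-\<infinity>})^n, not all -\<infinity>
  (coordinates i \<ge> n are fixed to -\<infinity>). All sets below are invariant under adding a
  real constant to all coordinates, so equality of these sets of representatives is
  equality of the corresponding subsets of TP^{n-1}.\<close>

definition TP :: "nat \<Rightarrow> (nat \<Rightarrow> ereal) set" where
  "TP n = {x. (\<forall>i<n. x i \<noteq> \<infinity>) \<and> (\<exists>i<n. x i \<noteq> -\<infinity>) \<and> (\<forall>i. n \<le> i \<longrightarrow> x i = -\<infinity>)}"

definition Vc :: "nat \<Rightarrow> nat set \<Rightarrow> (nat \<Rightarrow> ereal) set" where
  "Vc n C = {x\<in>TP n. \<exists>i\<in>C. \<exists>j\<in>C. i \<noteq> j \<and> x i = Max (x ` C) \<and> x j = Max (x ` C)}"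

definition VB :: "nat \<Rightarrow> nat set set \<Rightarrow> (nat \<Rightarrow> ereal) set" where
  "VB n B = TP n \<inter> (\<Inter>C\<in>B. Vc n C)"

definition tropical_basis :: "nat \<Rightarrow> nat set set \<Rightarrow> nat set set \<Rightarrow> bool" where
  "tropical_basis n \<C> B \<longleftrightarrow> B \<subseteq> \<C> \<and> VB n B = VB n \<C>"

definition minimal_tropical_basis :: "nat \<Rightarrow> nat set set \<Rightarrow> nat set set \<Rightarrow> bool" where
  "minimal_tropical_basis n \<C> B \<longleftrightarrow>
     tropical_basis n \<C> B \<and> (\<forall>B'. B' \<subset> B \<longrightarrow> \<not> tropical_basis n \<C> B')"

end

theory Submission
  imports Defs
begin

text \<open>A tropical basis must contain every circuit \<open>C\<close> whose removal enlarges \<open>V(\<C>)\<close>, so it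
  suffices to show that these essential circuits already form a tropical basis. Let \<open>x\<close> lie
  outside \<open>V(\<C>)\<close> and let \<open>C\<close> be a smallest circuit on which \<open>x\<close> attains its maximum only once,
  at \<open>i\<close>. The point \<open>y\<close> that is \<open>0\<close> on \<open>C - {i}\<close> and \<open>1\<close> elsewhere lies in \<open>V(D)\<close> for every
  other circuit \<open>D\<close>: otherwise \<open>D - {k} \<subseteq> C - {i}\<close> for some \<open>k \<notin> C\<close>, and since the matroid is
  binary, the symmetric difference \<open>(C - D) \<union> {k}\<close> is again a circuit. Both \<open>D\<close> and this circuit
  are smaller than \<open>C\<close> by simplicity, and \<open>x\<close> attains its maximum uniquely on one of them
  (at \<open>k\<close> or at \<open>i\<close>), contradicting the choice of \<open>C\<close>. Hence \<open>y\<close> separates \<open>V(\<C> - {C})\<close> from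
  \<open>V(\<C>)\<close>, so \<open>C\<close> is essential, and \<open>x \<notin> V(C)\<close>.\<close>

definition unique_max_on :: "(nat \<Rightarrow> ereal) \<Rightarrow> nat set \<Rightarrow> bool" where
  "unique_max_on x C \<longleftrightarrow> (\<exists>i\<in>C. \<forall>j\<in>C. j \<noteq> i \<longrightarrow> x j < x i)"

definition essential_circuits :: "nat \<Rightarrow> nat set set \<Rightarrow> nat set set" where
  "essential_circuits n \<C> = {C\<in>\<C>. VB n (\<C> - {C}) \<noteq> VB n \<C>}"

lemma notin_Vc_iff_unique_max_on:
  assumes "x \<in> TP n" "finite C" "C \<noteq> {}"
  shows "x \<notin> Vc n C \<longleftrightarrow> unique_max_on x C"
proof -
  have "Max (x ` C) \<in> x ` C"
    using assms by (intro Max_in) auto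
  then obtain a where a: "a \<in> C" "x a = Max (x ` C)"
    by auto
  have le: "x j \<le> Max (x ` C)" if "j \<in> C" for j
    using that assms by simp
  show ?thesis
  proof
    assume notin: "x \<notin> Vc n C"
    have "x j < x a" if "j \<in> C" "j \<noteq> a" for j
    proof (rule ccontr)
      assume "\<not> x j < x a"
      then have "x j = Max (x ` C)"
        using a le[OF \<open>j \<in> C\<close>] by simp
      then show False
        using notin assms(1) a that unfolding Vc_def by blast
    qed
    with a show "unique_max_on x C"
      unfolding unique_max_on_def by blast
  next
    assume "unique_max_on x C"
    then obtain i where i: "i \<in> C" "\<And>j. j \<in> C \<Longrightarrow> j \<noteq> i \<Longrightarrow> x j < x i"
      unfolding unique_max_on_def by blast
    have less: "x j < Max (x ` C)" if "j \<in> C" "j \<noteq> i" for j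
      using i(2)[OF that] le[OF i(1)] by (rule order_less_le_trans)
    show "x \<notin> Vc n C"
    proof
      assume "x \<in> Vc n C"
      then obtain j j' where "j \<in> C" "j' \<in> C" "j \<noteq> j'" "x j = Max (x ` C)" "x j' = Max (x ` C)"
        unfolding Vc_def by blast
      then show False
        using less[of j] less[of j'] by fastforce
    qed
  qed
qed

lemma simple_matroid_circuit_finite:
  assumes "simple_matroid n \<C>" "C \<in> \<C>"
  shows "finite C" "C \<noteq> {}"
proof -
  have "2 < card C"
    using assms unfolding simple_matroid_def by blast
  then show "finite C" "C \<noteq> {}"
    by (auto intro: card_ge_0_finite)
qed

lemma matroid_circuit_subset:
  assumes "matroid_circuits n \<C>" "C \<in> \<C>"
  shows "C \<subseteq> {..<n}"
  using assms(1)[unfolded matroid_circuits_def, THEN conjunct1] assms(2) by blast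

lemma VB_antimono: "B \<subseteq> B' \<Longrightarrow> VB n B' \<subseteq> VB n B"
  unfolding VB_def by blast

lemma essential_circuits_subset_tropical_basis:
  assumes "tropical_basis n \<C> B"
  shows "essential_circuits n \<C> \<subseteq> B"
proof
  fix C assume C: "C \<in> essential_circuits n \<C>"
  show "C \<in> B"
  proof (rule ccontr)
    assume "C \<notin> B"
    then have "B \<subseteq> \<C> - {C}"
      using assms unfolding tropical_basis_def by blast
    then have "VB n (\<C> - {C}) \<subseteq> VB n B"
      by (rule VB_antimono)
    also have "\<dots> = VB n \<C>"
      using assms unfolding tropical_basis_def by blast
    finally have "VB n (\<C> - {C}) \<subseteq> VB n \<C>" .
    moreover have "VB n \<C> \<subseteq> VB n (\<C> - {C})"
      by (rule VB_antimono) blast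
    ultimately have "VB n (\<C> - {C}) = VB n \<C>"
      by (rule equalityI)
    with C show False
      by (simp add: essential_circuits_def)
  qed
qed

lemma ex1_minimal_tropical_basisI:
  assumes "tropical_basis n \<C> (essential_circuits n \<C>)"
  shows "\<exists>!B. minimal_tropical_basis n \<C> B"
proof (rule ex1I)
  have "\<not> tropical_basis n \<C> B'" if "B' \<subset> essential_circuits n \<C>" for B'
    using that essential_circuits_subset_tropical_basis[of n \<C> B'] by auto
  with assms show "minimal_tropical_basis n \<C> (essential_circuits n \<C>)"
    unfolding minimal_tropical_basis_def by simp
next
  fix B assume B: "minimal_tropical_basis n \<C> B"
  then have "essential_circuits n \<C> \<subseteq> B"
    unfolding minimal_tropical_basis_def by (simp add: essential_circuits_subset_tropical_basis)
  moreover have "\<not> essential_circuits n \<C> \<subset> B"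
    using B assms unfolding minimal_tropical_basis_def by blast
  ultimately show "B = essential_circuits n \<C>"
    by auto
qed

lemma even_card_sym_diff:
  assumes "finite A" "finite B" "even (card A)" "even (card B)"
  shows "even (card ((A - B) \<union> (B - A)))"
proof -
  have "card ((A - B) \<union> (B - A)) = card (A - B) + card (B - A)"
    using assms by (intro card_Un_disjoint) auto
  moreover have "card A = card (A \<inter> B) + card (A - B)" "card B = card (A \<inter> B) + card (B - A)"
    using card_Int_Diff[OF assms(1), of B] card_Int_Diff[OF assms(2), of A]
    by (simp_all add: Int_commute)
  ultimately show ?thesis
    using assms(3,4) by presburger
qed

lemma f2_sum_zero_sym_diff:
  assumes "finite A" "finite B" "f2_sum_zero m v A" "f2_sum_zero m v B"
  shows "f2_sum_zero m v ((A - B) \<union> (B - A))"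
  unfolding f2_sum_zero_def
proof (intro allI impI)
  fix k assume "k < m"
  have "{i \<in> (A - B) \<union> (B - A). v i k} =
      ({i\<in>A. v i k} - {i\<in>B. v i k}) \<union> ({i\<in>B. v i k} - {i\<in>A. v i k})"
    by auto
  then show "even (card {i \<in> (A - B) \<union> (B - A). v i k})"
    using even_card_sym_diff[of "{i\<in>A. v i k}" "{i\<in>B. v i k}"] assms \<open>k < m\<close>
    by (simp add: f2_sum_zero_def)
qed

lemma binary_sym_diff_circuit:
  assumes bin: "binary_matroid n \<C>" and C: "C \<in> \<C>" and D: "D \<in> \<C>"
    and k: "k \<notin> C" "k \<in> D" and DC: "D \<subseteq> insert k C" "D \<noteq> {k}"
  shows "insert k (C - D) \<in> \<C>"
proof -
  obtain m v where \<C>_eq: "\<C> = {T. T \<subseteq> {..<n} \<and> T \<noteq> {} \<and> f2_sum_zero m v T \<and>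
      (\<forall>T'. T' \<subset> T \<and> T' \<noteq> {} \<longrightarrow> \<not> f2_sum_zero m v T')}"
    using bin unfolding binary_matroid_def by blast
  let ?Z = "f2_sum_zero m v" and ?S = "insert k (C - D)"
  have C_circ: "C \<subseteq> {..<n}" "?Z C" "\<And>T. T \<subset> C \<Longrightarrow> T \<noteq> {} \<Longrightarrow> \<not> ?Z T"
    using C \<C>_eq by auto
  have D_circ: "D \<subseteq> {..<n}" "?Z D"
    using D \<C>_eq by auto
  have fin: "finite C" "finite D"
    using C_circ(1) D_circ(1) finite_nat_iff_bounded by blast+
  obtain j where j: "j \<in> D" "j \<in> C" "j \<noteq> k"
    using k DC by blast
  have S_eq: "?S = (C - D) \<union> (D - C)"
    using k DC by auto
  have "?Z ?S"
    unfolding S_eq using f2_sum_zero_sym_diff fin C_circ D_circ by blast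
  moreover have "\<not> ?Z T" if T: "T \<subset> ?S" "T \<noteq> {}" for T
  proof
    assume ZT: "?Z T"
    have fin_T: "finite T"
      using T fin by (meson finite_Diff finite_insert finite_subset psubset_imp_subset)
    show False
    proof (cases "k \<in> T")
      case False
      then have "T \<subset> C"
        using T j by auto
      then show False
        using C_circ(3) T(2) ZT by blast
    next
      case True
      let ?T' = "(T - D) \<union> (D - T)"
      have "?Z ?T'"
        using f2_sum_zero_sym_diff fin_T fin ZT D_circ by blast
      moreover have "?T' \<subseteq> C"
        using T True DC k(2) by auto
      moreover have "?T' \<noteq> {}"
        using T j by auto
      ultimately have "?T' = C"
        using C_circ(3) by blast
      then have "T = ?S"
        using S_eq by blast
      then show False
        using T by simp
    qed
  qed
  ultimately show ?thesis
    using C_circ(1) D_circ(1) k(2) \<C>_eq by auto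
qed

lemma smaller_unique_max_circuit:
  assumes mc: "matroid_circuits n \<C>" and sm: "simple_matroid n \<C>" and bin: "binary_matroid n \<C>"
    and C: "C \<in> \<C>" and D: "D \<in> \<C>" "D \<noteq> C"
    and i: "i \<in> C" "\<And>j. j \<in> C \<Longrightarrow> j \<noteq> i \<Longrightarrow> x j < x i"
    and k: "k \<in> D" "D - {k} \<subseteq> C - {i}"
  shows "\<exists>C'\<in>\<C>. unique_max_on x C' \<and> card C' < card C"
proof -
  have "\<not> D \<subseteq> C"
    using mc C D unfolding matroid_circuits_def by blast
  then have k_C: "k \<notin> C"
    using k by blast
  have i_D: "i \<notin> D"
    using k k_C i(1) by blast
  have card_gt_2: "card E > 2" if "E \<in> \<C>" for E
    using sm that unfolding simple_matroid_def by blast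
  have fin_C: "finite C"
    using simple_matroid_circuit_finite[OF sm C] by blast
  have D_eq: "D = insert k (C \<inter> D)"
    using k by blast
  let ?S = "insert k (C - D)"
  have "D \<noteq> {k}"
    using card_gt_2[OF D(1)] by auto
  moreover have "D \<subseteq> insert k C"
    using D_eq by blast
  ultimately have S: "?S \<in> \<C>"
    using binary_sym_diff_circuit[OF bin C D(1) k_C k(1)] by blast
  have "card (insert k (C \<inter> D)) = Suc (card (C \<inter> D))"
    using fin_C k_C by simp
  then have "card D = Suc (card (C \<inter> D))"
    using D_eq by simp
  moreover have "card ?S = Suc (card (C - D))"
    using fin_C k_C by simp
  moreover have "card C = card (C \<inter> D) + card (C - D)"
    using card_Int_Diff[OF fin_C] .
  ultimately have smaller: "card D < card C" "card ?S < card C"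
    using card_gt_2[OF D(1)] card_gt_2[OF S] by linarith+
  show ?thesis
  proof (cases "x k < x i")
    case True
    then have "unique_max_on x ?S"
      unfolding unique_max_on_def using i i_D by (intro bexI[of _ i]) auto
    then show ?thesis
      using S smaller by blast
  next
    case False
    then have "x i \<le> x k"
      by simp
    have "x j < x k" if "j \<in> D" "j \<noteq> k" for j
    proof -
      have "x j < x i"
        using i(2) k(2) that by blast
      then show ?thesis
        using \<open>x i \<le> x k\<close> by (rule order_less_le_trans)
    qed
    then have "unique_max_on x D"
      unfolding unique_max_on_def using k(1) by blast
    then show ?thesis
      using D(1) smaller by blast
  qed
qed

lemma unique_max_on_two_valued:
  assumes "D \<subseteq> {..<n}" "1 < card D"
    and "unique_max_on (\<lambda>j. if j < n then if j \<in> S then 0 else 1 else -\<infinity>) D"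
  shows "\<exists>k\<in>D. D - {k} \<subseteq> S"
proof -
  define y :: "nat \<Rightarrow> ereal" where "y = (\<lambda>j. if j < n then if j \<in> S then 0 else 1 else -\<infinity>)"
  obtain k where k: "k \<in> D" "\<And>j. j \<in> D \<Longrightarrow> j \<noteq> k \<Longrightarrow> y j < y k"
    using assms(3) unfolding unique_max_on_def y_def by blast
  have y_D: "y j = (if j \<in> S then 0 else 1)" if "j \<in> D" for j
    using assms(1) that unfolding y_def by auto
  have "D \<noteq> {k}"
    using assms(2) by auto
  then obtain j0 where "j0 \<in> D" "j0 \<noteq> k"
    using k(1) by blast
  then have "y j0 < y k"
    by (rule k(2))
  then have "k \<notin> S"
    using y_D \<open>j0 \<in> D\<close> k(1) by (auto split: if_splits)
  have "j \<in> S" if "j \<in> D - {k}" for j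
  proof (rule ccontr)
    assume "j \<notin> S"
    then have "y j = y k"
      using y_D \<open>k \<notin> S\<close> k(1) that by simp
    then show False
      using k(2)[of j] that by simp
  qed
  with k(1) show ?thesis
    by blast
qed

lemma least_unique_max_circuit_essential:
  assumes mc: "matroid_circuits n \<C>" and sm: "simple_matroid n \<C>" and bin: "binary_matroid n \<C>"
    and C: "C \<in> \<C>" "unique_max_on x C"
    and least: "\<And>C'. C' \<in> \<C> \<Longrightarrow> unique_max_on x C' \<Longrightarrow> card C \<le> card C'"
  shows "C \<in> essential_circuits n \<C>"
proof -
  note fin_ne = simple_matroid_circuit_finite[OF sm]
  obtain i where i: "i \<in> C" "\<And>j. j \<in> C \<Longrightarrow> j \<noteq> i \<Longrightarrow> x j < x i"
    using C(2) unfolding unique_max_on_def by blast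
  have i_n: "i < n"
    using matroid_circuit_subset[OF mc C(1)] i(1) by blast
  define y :: "nat \<Rightarrow> ereal" where "y = (\<lambda>j. if j < n then if j \<in> C - {i} then 0 else 1 else -\<infinity>)"
  have y_TP: "y \<in> TP n"
    using i_n unfolding TP_def y_def by auto
  have "unique_max_on y C"
    unfolding unique_max_on_def y_def using i(1) i_n matroid_circuit_subset[OF mc C(1)]
    by (intro bexI[of _ i]) auto
  then have "y \<notin> Vc n C"
    using notin_Vc_iff_unique_max_on[OF y_TP fin_ne[OF C(1)]] by blast
  moreover have "y \<in> Vc n D" if D: "D \<in> \<C>" "D \<noteq> C" for D
  proof (rule ccontr)
    assume "y \<notin> Vc n D"
    then have "unique_max_on y D"
      using notin_Vc_iff_unique_max_on[OF y_TP fin_ne[OF D(1)]] by blast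
    moreover have "1 < card D"
      using sm D(1) unfolding simple_matroid_def by fastforce
    ultimately obtain k where "k \<in> D" "D - {k} \<subseteq> C - {i}"
      using unique_max_on_two_valued[OF matroid_circuit_subset[OF mc D(1)]] unfolding y_def by blast
    then obtain C' where "C' \<in> \<C>" "unique_max_on x C'" "card C' < card C"
      using smaller_unique_max_circuit[where x = x, OF mc sm bin C(1) D i] by blast
    with least show False
      by (meson not_le)
  qed
  ultimately have "y \<in> VB n (\<C> - {C})" "y \<notin> VB n \<C>"
    using y_TP C(1) unfolding VB_def by blast+
  then show ?thesis
    unfolding essential_circuits_def using C(1) by blast
qed

lemma essential_circuits_tropical_basis:
  assumes mc: "matroid_circuits n \<C>" and sm: "simple_matroid n \<C>" and bin: "binary_matroid n \<C>"
  shows "tropical_basis n \<C> (essential_circuits n \<C>)"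
proof -
  note fin_ne = simple_matroid_circuit_finite[OF sm]
  have "x \<in> VB n \<C>" if x: "x \<in> VB n (essential_circuits n \<C>)" for x
  proof (rule ccontr)
    assume "x \<notin> VB n \<C>"
    moreover have x_TP: "x \<in> TP n"
      using x unfolding VB_def by blast
    ultimately obtain C where C: "C \<in> \<C>" "x \<notin> Vc n C"
      unfolding VB_def by blast
    then have "unique_max_on x C"
      using notin_Vc_iff_unique_max_on[OF x_TP fin_ne[OF C(1)]] by blast
    then obtain C0 where C0: "C0 \<in> \<C>" "unique_max_on x C0"
      and least: "\<And>C'. C' \<in> \<C> \<Longrightarrow> unique_max_on x C' \<Longrightarrow> card C0 \<le> card C'"
      using ex_has_least_nat[of "\<lambda>C. C \<in> \<C> \<and> unique_max_on x C" C card] C(1) by blast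
    then have "C0 \<in> essential_circuits n \<C>"
      using least_unique_max_circuit_essential[OF mc sm bin] by blast
    then have "x \<in> Vc n C0"
      using x unfolding VB_def by blast
    then show False
      using notin_Vc_iff_unique_max_on[OF x_TP fin_ne[OF C0(1)]] C0(2) by blast
  qed
  moreover have "essential_circuits n \<C> \<subseteq> \<C>"
    unfolding essential_circuits_def by blast
  then have "VB n \<C> \<subseteq> VB n (essential_circuits n \<C>)"
    by (rule VB_antimono)
  ultimately show ?thesis
    unfolding tropical_basis_def using \<open>essential_circuits n \<C> \<subseteq> \<C>\<close> by blast
qed

theorem theorem4:
  fixes n :: nat and \<C> :: "nat set set"
  assumes "matroid_circuits n \<C>"
    and "simple_matroid n \<C>"
    and "binary_matroid n \<C>"
  shows "\<exists>!B. minimal_tropical_basis n \<C> B"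
  by (rule ex1_minimal_tropical_basisI[OF essential_circuits_tropical_basis[OF assms]])

end
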